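(* Let $W_\circ=\bigcup_{\lambda\in\Lambda^\circ}W(\lambda)$. Exactly one of the following holds: (a) if $\underline f<0<\overline f$, then $f(\lambda)=0$ has a unique solution $\hat\lambda\in\Lambda^\circ$ and $\widehat W=W_\circ=\{w(\hat\lambda)\}$; (b) if $\underline f=0=\overline f$, then $f(\lambda)=0$ for every $\lambda\in\Lambda^\circ$ and $\widehat W=W_\circ=\{0\}$; (c) in all other cases, $f(\lambda)=0$ has no solution in $\Lambda^\circ$ and $W_\circ=\emptyset$.
   Context: Regular dimension-reduced canonical form: $q\ge1$, $\gamma_1>\dots>\gamma_q$ nonzero reals with $\gamma_1>0$, $\Gamma^*=\operatorname{diag}(\gamma_1,\dots,\gamma_q)$, $\delta=(\delta_i)$ with $\delta_i\ge0$, $k^*\in\mathbb{R}$, $\varepsilon\ge0$; either ($m_0=0$) $\varepsilon=0$, $w=z\in\mathbb{R}^q$, $w_0=\delta$, $\Delta=\Gamma^*$, $d=0$; or ($m_0>0$) $\varepsilon>0$, $w=(y,z^\top)^\top\in\mathbb{R}^{q+1}$, $w_0=(0,\delta^\top)^\top$, $\Delta=\operatorname{diag}(0,\Gamma^* )$, $d=\varepsilon e_1$. Problem: minimise $\|w-w_0\|^2$ over $W=\{w:Q^*(w)=0\}\neq\emptyset$, $Q^*(w)=w^\top\Delta w+2d^\top w-k^*$; $\widehat W$ is the set of minimisers. Admissible region $\Lambda=(-\infty,\gamma_1^{-1}]$ if $\gamma_q>0$, $[\gamma_q^{-1},\gamma_1^{-1}]$ if $\gamma_q<0$; $\Lambda^\circ$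 its interior. $W(\lambda)$ is the set of $w\in W$ with $(I-\lambda\Delta)w=w_0+\lambda d$. For $\lambda\in\Lambda^\circ$, $w(\lambda)=(I-\lambda\Delta)^{-1}(w_0+\lambda d)$, $f(\lambda)=\sum_{i=1}^q(1-\lambda\gamma_i)^{-2}\gamma_i\delta_i^2+2\varepsilon^2\lambda-k^*$, $\underline f=\inf_{\Lambda^\circ}f$, $\overline f=\sup_{\Lambda^\circ}f$. *)

theory Defs
  imports "HOL-Analysis.Analysis"
begin

(* Vectors are modelled as functions nat => real supported on the index set idx.
   Case m0 = 0 (eps = 0): w = z in R^q, indices 1..q.
   Case m0 > 0 (eps > 0): w = (y, z) in R^(q+1), index 0 is y, indices 1..q are z. *)

definition idx :: "nat \<Rightarrow> real \<Rightarrow> nat set" where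
  "idx q eps = (if eps = 0 then {1..q} else {0..q})"

definition vecs :: "nat \<Rightarrow> real \<Rightarrow> (nat \<Rightarrow> real) set" where
  "vecs q eps = {w. \<forall>i. i \<notin> idx q eps \<longrightarrow> w i = 0}"

definition Delta :: "(nat \<Rightarrow> real) \<Rightarrow> nat \<Rightarrow> real" where
  "Delta gam i = (if i = 0 then 0 else gam i)"

definition wz :: "(nat \<Rightarrow> real) \<Rightarrow> nat \<Rightarrow> real" where
  "wz del i = (if i = 0 then 0 else del i)"

(* d = eps e_1 (the y-coordinate), resp. d = 0 *)
definition dvec :: "real \<Rightarrow> nat \<Rightarrow> real" where
  "dvec eps i = (if i = 0 then eps else 0)"

definition Qstar :: "nat \<Rightarrow> (nat \<Rightarrow> real) \<Rightarrow> real \<Rightarrow> real \<Rightarrow> (nat \<Rightarrow> real) \<Rightarrow> real" where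
  "Qstar q gam k eps w =
     (\<Sum>i\<in>idx q eps. Delta gam i * (w i)^2) + 2 * (\<Sum>i\<in>idx q eps. dvec eps i * w i) - k"

definition Wset :: "nat \<Rightarrow> (nat \<Rightarrow> real) \<Rightarrow> real \<Rightarrow> real \<Rightarrow> (nat \<Rightarrow> real) set" where
  "Wset q gam k eps = {w \<in> vecs q eps. Qstar q gam k eps w = 0}"

definition obj :: "nat \<Rightarrow> (nat \<Rightarrow> real) \<Rightarrow> real \<Rightarrow> (nat \<Rightarrow> real) \<Rightarrow> real" where
  "obj q del eps w = (\<Sum>i\<in>idx q eps. (w i - wz del i)^2)"

definition What :: "nat \<Rightarrow> (nat \<Rightarrow> real) \<Rightarrow> (nat \<Rightarrow> real) \<Rightarrow> real \<Rightarrow> real \<Rightarrow> (nat \<Rightarrow> real) set" where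
  "What q gam del k eps =
     {w \<in> Wset q gam k eps. \<forall>v\<in>Wset q gam k eps. obj q del eps w \<le> obj q del eps v}"

definition Lam :: "nat \<Rightarrow> (nat \<Rightarrow> real) \<Rightarrow> real set" where
  "Lam q gam = (if gam q > 0 then {..1 / gam 1} else {1 / gam q .. 1 / gam 1})"

definition Wlam :: "nat \<Rightarrow> (nat \<Rightarrow> real) \<Rightarrow> (nat \<Rightarrow> real) \<Rightarrow> real \<Rightarrow> real \<Rightarrow> real \<Rightarrow> (nat \<Rightarrow> real) set" where
  "Wlam q gam del k eps lam =
     {w \<in> Wset q gam k eps. \<forall>i\<in>idx q eps.
        (1 - lam * Delta gam i) * w i = wz del i + lam * dvec eps i}"

definition Wcirc :: "nat \<Rightarrow> (nat \<Rightarrow> real) \<Rightarrow> (nat \<Rightarrow> real) \<Rightarrow> real \<Rightarrow> real \<Rightarrow> (nat \<Rightarrow> real) set" where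
  "Wcirc q gam del k eps = (\<Union>lam\<in>interior (Lam q gam). Wlam q gam del k eps lam)"

definition wfun :: "nat \<Rightarrow> (nat \<Rightarrow> real) \<Rightarrow> (nat \<Rightarrow> real) \<Rightarrow> real \<Rightarrow> real \<Rightarrow> nat \<Rightarrow> real" where
  "wfun q gam del eps lam = (\<lambda>i. if i \<in> idx q eps
       then (wz del i + lam * dvec eps i) / (1 - lam * Delta gam i) else 0)"

definition ff :: "nat \<Rightarrow> (nat \<Rightarrow> real) \<Rightarrow> (nat \<Rightarrow> real) \<Rightarrow> real \<Rightarrow> real \<Rightarrow> real \<Rightarrow> real" where
  "ff q gam del k eps lam =
     (\<Sum>i=1..q. gam i * (del i)^2 / (1 - lam * gam i)^2) + 2 * eps^2 * lam - k"

definition f_inf :: "nat \<Rightarrow> (nat \<Rightarrow> real) \<Rightarrow> (nat \<Rightarrow> real) \<Rightarrow> real \<Rightarrow> real \<Rightarrow> ereal" where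
  "f_inf q gam del k eps = (INF lam\<in>interior (Lam q gam). ereal (ff q gam del k eps lam))"

definition f_sup :: "nat \<Rightarrow> (nat \<Rightarrow> real) \<Rightarrow> (nat \<Rightarrow> real) \<Rightarrow> real \<Rightarrow> real \<Rightarrow> ereal" where
  "f_sup q gam del k eps = (SUP lam\<in>interior (Lam q gam). ereal (ff q gam del k eps lam))"

end

theory Submission
  imports Defs
begin

text \<open>On the interior of the admissible region every factor \<open>1 - \<lambda>\<gamma>\<^sub>i\<close> is positive, so
  \<open>w(\<lambda>)\<close> is the only candidate in \<open>W(\<lambda>)\<close>, it lies in \<open>W\<close> exactly when \<open>f(\<lambda>) = 0\<close>, and
  then completing the square (Lagrange multiplier \<open>\<lambda>\<close>) shows that it is the unique minimiser.
  Moreover \<open>f\<close> is continuous and either strictly increasing (each \<open>\<gamma>\<^sub>i\<delta>\<^sub>i\<^sup>2/(1 - \<lambda>\<gamma>\<^sub>i)\<^sup>2\<close>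
  is non-decreasing, and \<open>2\<epsilon>\<^sup>2\<lambda>\<close> increasing) or, when \<open>\<delta> = 0\<close> and \<open>\<epsilon> = 0\<close>, constant;
  the intermediate value theorem then decides how many zeros it has.\<close>

lemma strict_mono_on_zero_imp_sign_change:
  fixes F :: "real \<Rightarrow> real"
  assumes "open I" "strict_mono_on I F" "x \<in> I" "F x = 0"
  shows "(INF l\<in>I. ereal (F l)) < 0 \<and> 0 < (SUP l\<in>I. ereal (F l))"
proof -
  obtain e where "e > 0" "ball x e \<subseteq> I"
    using assms(1,3) openE by blast
  then have "x - e/2 \<in> I" "x + e/2 \<in> I"
    by (auto simp: dist_real_def)
  moreover have "F (x - e/2) < 0" "0 < F (x + e/2)"
    using strict_mono_onD[OF assms(2)] calculation \<open>e > 0\<close> assms(3,4) by force+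
  ultimately show ?thesis
    by (auto simp: INF_less_iff less_SUP_iff)
qed

lemma sign_change_imp_zero:
  fixes F :: "real \<Rightarrow> real"
  assumes "connected I" "continuous_on I F"
    and "(INF l\<in>I. ereal (F l)) < 0" "0 < (SUP l\<in>I. ereal (F l))"
  obtains x where "x \<in> I" "F x = 0"
proof -
  obtain a b where "a \<in> I" "F a < 0" "b \<in> I" "0 < F b"
    using assms(3,4) by (auto simp: INF_less_iff less_SUP_iff)
  then have "0 \<in> F ` I"
    using connectedD_interval[OF connected_continuous_image[OF assms(2,1)], of "F a" "F b" 0]
    by auto
  then show thesis using that by (auto simp: image_iff)
qed

lemma INF_SUP_eq_imp_const:
  fixes F :: "'a \<Rightarrow> real"
  assumes "(INF l\<in>I. ereal (F l)) = ereal c" "(SUP l\<in>I. ereal (F l)) = ereal c" "x \<in> I"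
  shows "F x = c"
proof -
  have "ereal c \<le> ereal (F x)" "ereal (F x) \<le> ereal c"
    using INF_lower[OF assms(3)] SUP_upper[OF assms(3)] assms(1,2) by metis+
  then show ?thesis by simp
qed

lemma strict_mono_on_zero_set:
  fixes F :: "real \<Rightarrow> real"
  assumes "open I" "connected I" "continuous_on I F" "strict_mono_on I F"
  defines "sign_change \<equiv> (INF l\<in>I. ereal (F l)) < 0 \<and> 0 < (SUP l\<in>I. ereal (F l))"
  shows "sign_change \<Longrightarrow> \<exists>z\<in>I. {x \<in> I. F x = 0} = {z}"
    and "\<not> sign_change \<Longrightarrow> {x \<in> I. F x = 0} = {}"
proof -
  assume sign_change
  then obtain z where z: "z \<in> I" "F z = 0"
    using sign_change_imp_zero[OF assms(2,3)] unfolding sign_change_def by blast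
  moreover have "x = z" if "x \<in> I" "F x = 0" for x
    using strict_mono_on_eqD[OF assms(4)] that z by metis
  ultimately show "\<exists>z\<in>I. {x \<in> I. F x = 0} = {z}" by blast
next
  assume "\<not> sign_change"
  then show "{x \<in> I. F x = 0} = {}"
    using strict_mono_on_zero_imp_sign_change[OF assms(1,4)] unfolding sign_change_def by blast
qed

lemma ratio_sq_le:
  fixes l m g d :: real
  assumes "l < m" "0 < 1 - l*g" "0 < 1 - m*g"
  shows "g*d^2/(1 - l*g)^2 \<le> g*d^2/(1 - m*g)^2"
    and "g \<noteq> 0 \<Longrightarrow> d \<noteq> 0 \<Longrightarrow> g*d^2/(1 - l*g)^2 < g*d^2/(1 - m*g)^2"
proof -
  define a b where "a = 1 - l*g" and "b = 1 - m*g"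
  have a: "a > 0" and b: "b > 0" using assms by (auto simp: a_def b_def)
  have "g*d^2/b^2 - g*d^2/a^2 = g*d^2 * (a - b) * (a + b) / (a^2*b^2)"
    using a b by (simp add: field_simps power2_eq_square)
  also have "\<dots> = d^2 * (m - l) * g^2 * (a + b) / (a^2*b^2)"
    by (simp add: a_def b_def power2_eq_square algebra_simps)
  finally have diff: "g*d^2/b^2 - g*d^2/a^2 = d^2 * (m - l) * g^2 * (a + b) / (a^2*b^2)" .
  have "0 \<le> d^2 * (m - l) * g^2 * (a + b) / (a^2*b^2)"
    using a b assms(1) by simp
  then show "g*d^2/(1 - l*g)^2 \<le> g*d^2/(1 - m*g)^2"
    using diff by (simp add: a_def b_def)
  assume "g \<noteq> 0" "d \<noteq> 0"
  then have "0 < d^2 * (m - l) * g^2 * (a + b) / (a^2*b^2)"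
    using a b assms(1) by simp
  then show "g*d^2/(1 - l*g)^2 < g*d^2/(1 - m*g)^2"
    using diff by (simp add: a_def b_def)
qed

definition admissible :: "nat \<Rightarrow> (nat \<Rightarrow> real) \<Rightarrow> real \<Rightarrow> bool" where
  "admissible q gam l \<longleftrightarrow> (\<forall>i\<in>{1..q}. 0 < 1 - l * gam i)"

lemma interior_Lam:
  "interior (Lam q gam) = (if 0 < gam q then {..<1 / gam 1} else {1 / gam q<..<1 / gam 1})"
  by (simp add: Lam_def)

lemma connected_interior_Lam: "connected (interior (Lam q gam))"
  by (simp add: interior_Lam)

lemma zero_in_interior_Lam:
  assumes "gam 1 > 0" "gam q \<noteq> 0"
  shows "0 \<in> interior (Lam q gam)"
  using assms by (auto simp: interior_Lam)

lemma admissible_if_in_interior_Lam: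
  assumes ord: "\<And>i j. 1 \<le> i \<Longrightarrow> i < j \<Longrightarrow> j \<le> q \<Longrightarrow> gam i > gam j"
    and nz: "\<And>i. 1 \<le> i \<Longrightarrow> i \<le> q \<Longrightarrow> gam i \<noteq> 0"
    and "gam 1 > 0"
    and l: "l \<in> interior (Lam q gam)"
  shows "admissible q gam l"
  unfolding admissible_def
proof
  fix i assume i: "i \<in> {1..q}"
  have "gam q \<le> gam i" "gam i \<le> gam 1"
    using ord[of i q] ord[of 1 i] i by (cases "i = q"; cases "i = 1"; auto)+
  moreover have "l * gam 1 < 1"
    using l \<open>gam 1 > 0\<close> by (auto simp: interior_Lam less_divide_eq split: if_splits)
  moreover have "l * gam q < 1" if "gam q < 0"
    using l that by (auto simp: interior_Lam divide_less_eq)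
  moreover have "gam i \<noteq> 0" using nz i by auto
  ultimately show "0 < 1 - l * gam i"
  proof (cases "0 < gam i"; cases "0 \<le> l")
    assume "0 < gam i" "0 \<le> l"
    then have "l * gam i \<le> l * gam 1" using \<open>gam i \<le> gam 1\<close> by (simp add: mult_left_mono)
    then show ?thesis using \<open>l * gam 1 < 1\<close> by simp
  next
    assume "\<not> 0 < gam i" "\<not> 0 \<le> l"
    then have "gam q < 0" "l * gam i \<le> l * gam q"
      using \<open>gam q \<le> gam i\<close> \<open>gam i \<noteq> 0\<close> by (simp_all add: mult_left_mono_neg)
    then show ?thesis using \<open>gam q < 0 \<Longrightarrow> l * gam q < 1\<close> by simp
  qed (use mult_neg_pos[of l "gam i"] mult_nonneg_nonpos[of l "gam i"] in auto)
qed

lemma strict_mono_on_ff: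
  assumes nz: "\<And>i. 1 \<le> i \<Longrightarrow> i \<le> q \<Longrightarrow> gam i \<noteq> 0"
    and nondeg: "\<not> ((\<forall>i\<in>{1..q}. del i = 0) \<and> eps = 0)"
  shows "strict_mono_on {l. admissible q gam l} (ff q gam del k eps)"
proof (rule strict_mono_onI)
  fix l m assume "l \<in> {l. admissible q gam l}" "m \<in> {l. admissible q gam l}" "l < m"
  then have pos: "\<forall>i\<in>{1..q}. 0 < 1 - l * gam i \<and> 0 < 1 - m * gam i"
    by (simp add: admissible_def)
  let ?S = "\<lambda>l. \<Sum>i=1..q. gam i * (del i)^2 / (1 - l * gam i)^2"
  have S_le: "?S l \<le> ?S m"
    by (rule sum_mono) (use pos ratio_sq_le(1)[OF \<open>l < m\<close>] in auto)
  show "ff q gam del k eps l < ff q gam del k eps m"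
  proof (cases "eps = 0")
    case True
    then obtain j where j: "j \<in> {1..q}" "del j \<noteq> 0" using nondeg by auto
    have "?S l < ?S m"
    proof (rule sum_strict_mono_ex1)
      show "\<forall>i\<in>{1..q}. gam i * (del i)^2 / (1 - l * gam i)^2 \<le> gam i * (del i)^2 / (1 - m * gam i)^2"
        using pos ratio_sq_le(1)[OF \<open>l < m\<close>] by auto
      show "\<exists>i\<in>{1..q}. gam i * (del i)^2 / (1 - l * gam i)^2 < gam i * (del i)^2 / (1 - m * gam i)^2"
        using j pos nz ratio_sq_le(2)[OF \<open>l < m\<close>] by fastforce
    qed simp
    then show ?thesis using True by (simp add: ff_def)
  next
    case False
    then show ?thesis using S_le \<open>l < m\<close> by (simp add: ff_def add_le_less_mono)
  qed
qed

lemma ff_degenerate: "\<forall>i\<in>{1..q}. del i = 0 \<Longrightarrow> ff q gam del k 0 l = - k"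
  by (simp add: ff_def)

lemma continuous_on_ff: "continuous_on {l. admissible q gam l} (ff q gam del k eps)"
  unfolding ff_def admissible_def by (intro continuous_intros) (auto dest: bspec)

lemma finite_idx [simp]: "finite (idx q eps)"
  by (simp add: idx_def)

lemma admissible_Delta_pos:
  assumes "admissible q gam l" "i \<in> idx q eps"
  shows "0 < 1 - l * Delta gam i"
  using assms by (auto simp: admissible_def Delta_def idx_def split: if_splits)

lemma wfun_in_vecs: "wfun q gam del eps l \<in> vecs q eps"
  by (simp add: vecs_def wfun_def)

lemma Qstar_wfun: "Qstar q gam k eps (wfun q gam del eps l) = ff q gam del k eps l"
proof (cases "eps = 0")
  case True
  then show ?thesis
    by (simp add: Qstar_def ff_def idx_def Delta_def dvec_def wfun_def wz_def power_divide)
next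
  case False
  have "(\<Sum>i=0..q. Delta gam i * (wfun q gam del eps l i)^2) =
      (\<Sum>i=1..q. gam i * (del i)^2 / (1 - l * gam i)^2)"
    by (simp add: sum.atLeast_Suc_atMost Delta_def wfun_def idx_def False wz_def dvec_def power_divide)
  moreover have "(\<Sum>i=0..q. dvec eps i * wfun q gam del eps l i) = eps * (l * eps)"
    by (simp add: sum.atLeast_Suc_atMost wfun_def idx_def False wz_def dvec_def Delta_def)
  ultimately show ?thesis
    using False by (simp add: Qstar_def ff_def idx_def power2_eq_square)
qed

lemma wfun_in_Wset_iff: "wfun q gam del eps l \<in> Wset q gam k eps \<longleftrightarrow> ff q gam del k eps l = 0"
  by (simp add: Wset_def wfun_in_vecs Qstar_wfun)

lemma Wlam_eq:
  assumes "admissible q gam l"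
  shows "Wlam q gam del k eps l = (if ff q gam del k eps l = 0 then {wfun q gam del eps l} else {})"
proof -
  have "w \<in> Wlam q gam del k eps l \<longleftrightarrow> w \<in> Wset q gam k eps \<and> w = wfun q gam del eps l" for w
  proof -
    have "(1 - l * Delta gam i) * w i = wz del i + l * dvec eps i \<longleftrightarrow> w i = wfun q gam del eps l i"
      if "i \<in> idx q eps" for i
      using admissible_Delta_pos[OF assms that] that by (auto simp: wfun_def eq_divide_eq ac_simps)
    moreover have "w \<in> Wset q gam k eps \<Longrightarrow> i \<notin> idx q eps \<Longrightarrow> w i = wfun q gam del eps l i" for i
      by (simp add: Wset_def vecs_def wfun_def)
    ultimately show ?thesis
      by (auto simp: Wlam_def)
  qed
  then show ?thesis
    using wfun_in_Wset_iff by auto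
qed

lemma square_dist_Lagrange:
  fixes w v w0 D dd l :: real
  assumes "(1 - l * D) * v = w0 + l * dd"
  shows "(w - w0)^2 = (v - w0)^2 + (1 - l * D) * (w - v)^2
           + l * ((D * w^2 + 2 * (dd * w)) - (D * v^2 + 2 * (dd * v)))"
proof -
  have w0: "w0 = v - l * D * v - l * dd" using assms by (simp add: algebra_simps)
  show ?thesis unfolding w0 by (simp add: power2_eq_square algebra_simps)
qed

lemma obj_Wset_eq:
  assumes "admissible q gam l" "ff q gam del k eps l = 0" "w \<in> Wset q gam k eps"
  defines "v \<equiv> wfun q gam del eps l"
  shows "obj q del eps w = obj q del eps v + (\<Sum>i\<in>idx q eps. (1 - l * Delta gam i) * (w i - v i)^2)"
proof -
  let ?Q = "\<lambda>u. (\<Sum>i\<in>idx q eps. Delta gam i * (u i)^2 + 2 * (dvec eps i * u i))"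
  have "(1 - l * Delta gam i) * v i = wz del i + l * dvec eps i" if "i \<in> idx q eps" for i
    using admissible_Delta_pos[OF assms(1) that] that by (simp add: v_def wfun_def)
  then have "obj q del eps w = (\<Sum>i\<in>idx q eps. (v i - wz del i)^2
      + (1 - l * Delta gam i) * (w i - v i)^2
      + l * ((Delta gam i * (w i)^2 + 2 * (dvec eps i * w i))
             - (Delta gam i * (v i)^2 + 2 * (dvec eps i * v i))))"
    unfolding obj_def by (intro sum.cong refl square_dist_Lagrange)
  also have "\<dots> = obj q del eps v
      + (\<Sum>i\<in>idx q eps. (1 - l * Delta gam i) * (w i - v i)^2) + l * (?Q w - ?Q v)"
    by (simp add: obj_def sum.distrib sum_subtractf flip: sum_distrib_left right_diff_distrib)
  finally have "obj q del eps w = obj q del eps v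
      + (\<Sum>i\<in>idx q eps. (1 - l * Delta gam i) * (w i - v i)^2) + l * (?Q w - ?Q v)" .
  moreover have "?Q w = k" "?Q v = k"
    using assms(3) wfun_in_Wset_iff[of q gam del eps l k] assms(2)
    by (simp_all add: Wset_def Qstar_def sum.distrib sum_distrib_left v_def)
  ultimately show ?thesis by simp
qed

lemma What_eq:
  assumes "admissible q gam l" "ff q gam del k eps l = 0"
  shows "What q gam del k eps = {wfun q gam del eps l}"
proof -
  define v where "v = wfun q gam del eps l"
  have v: "v \<in> Wset q gam k eps"
    using assms(2) wfun_in_Wset_iff by (simp add: v_def)
  have nonneg: "0 \<le> (1 - l * Delta gam i) * (w i - v i)^2" if "i \<in> idx q eps" for i w
    using admissible_Delta_pos[OF assms(1) that] by simp
  have sum_nonneg: "0 \<le> (\<Sum>i\<in>idx q eps. (1 - l * Delta gam i) * (w i - v i)^2)" for w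
    by (rule sum_nonneg) (rule nonneg)
  have "w = v" if "w \<in> Wset q gam k eps" "obj q del eps w \<le> obj q del eps v" for w
  proof
    fix i
    show "w i = v i"
    proof (cases "i \<in> idx q eps")
      case True
      have "(\<Sum>i\<in>idx q eps. (1 - l * Delta gam i) * (w i - v i)^2) = 0"
        using obj_Wset_eq[OF assms that(1)] that(2) sum_nonneg[of w]
        by (simp add: v_def)
      then have "(1 - l * Delta gam i) * (w i - v i)^2 = 0"
        using sum_nonneg_eq_0_iff[OF finite_idx, where f="\<lambda>i. (1 - l * Delta gam i) * (w i - v i)^2"]
          nonneg True by blast
      then show ?thesis using admissible_Delta_pos[OF assms(1) True] by simp
    next
      case False
      then show ?thesis using that(1) by (simp add: Wset_def vecs_def v_def wfun_def)
    qed
  qed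
  moreover have "obj q del eps v \<le> obj q del eps w" if "w \<in> Wset q gam k eps" for w
    using obj_Wset_eq[OF assms that] sum_nonneg[of w] by (simp add: v_def)
  ultimately show ?thesis
    using v by (auto simp: What_def v_def)
qed

lemma wfun_degenerate: "\<forall>i\<in>{1..q}. del i = 0 \<Longrightarrow> wfun q gam del 0 l = (\<lambda>_. 0)"
  by (auto simp: wfun_def wz_def dvec_def idx_def)

lemma ff_zero_set:
  fixes q :: nat and gam del :: "nat \<Rightarrow> real" and k eps :: real
  assumes "q \<ge> 1"
    and ord: "\<And>i j. 1 \<le> i \<Longrightarrow> i < j \<Longrightarrow> j \<le> q \<Longrightarrow> gam i > gam j"
    and nz: "\<And>i. 1 \<le> i \<Longrightarrow> i \<le> q \<Longrightarrow> gam i \<noteq> 0"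
    and "gam 1 > 0"
  defines "I \<equiv> interior (Lam q gam)"
    and "Z \<equiv> {l \<in> interior (Lam q gam). ff q gam del k eps l = 0}"
    and "sign_change \<equiv> f_inf q gam del k eps < 0 \<and> 0 < f_sup q gam del k eps"
    and "vanishing \<equiv> f_inf q gam del k eps = 0 \<and> f_sup q gam del k eps = 0"
  shows "sign_change \<Longrightarrow> \<exists>lh\<in>I. Z = {lh}"
    and "vanishing \<Longrightarrow> Z = I \<and> (\<forall>l\<in>I. wfun q gam del eps l = (\<lambda>_. 0))"
    and "\<not> sign_change \<Longrightarrow> \<not> vanishing \<Longrightarrow> Z = {}"
proof -
  let ?F = "ff q gam del k eps"
  let ?degenerate = "(\<forall>i\<in>{1..q}. del i = 0) \<and> eps = 0"
  have adm: "I \<subseteq> {l. admissible q gam l}"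
    using admissible_if_in_interior_Lam[of q gam, OF ord nz \<open>gam 1 > 0\<close>] by (auto simp: I_def)
  have "0 \<in> I"
    unfolding I_def using \<open>q \<ge> 1\<close> nz \<open>gam 1 > 0\<close> by (intro zero_in_interior_Lam) auto
  have inf: "f_inf q gam del k eps = (INF l\<in>I. ereal (?F l))"
    and sup: "f_sup q gam del k eps = (SUP l\<in>I. ereal (?F l))"
    by (simp_all add: f_inf_def f_sup_def I_def)
  have degenerate: "\<not> sign_change \<and> (vanishing \<longleftrightarrow> k = 0) \<and> Z = (if k = 0 then I else {})
      \<and> (\<forall>l. wfun q gam del eps l = (\<lambda>_. 0))" if ?degenerate
  proof -
    have "?F = (\<lambda>_. - k)"
      using that by (auto simp: ff_degenerate)
    then have "f_inf q gam del k eps = ereal (- k)" "f_sup q gam del k eps = ereal (- k)"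
      unfolding inf sup using \<open>0 \<in> I\<close> by (auto intro: INF_const SUP_const)
    then show ?thesis
      using that by (auto simp: sign_change_def vanishing_def Z_def I_def ff_degenerate wfun_degenerate)
  qed
  have nondegenerate: "(sign_change \<longrightarrow> (\<exists>lh\<in>I. Z = {lh})) \<and> (\<not> sign_change \<longrightarrow> Z = {})
      \<and> \<not> vanishing" if "\<not> ?degenerate"
  proof -
    have "strict_mono_on I ?F"
      using monotone_on_subset[OF strict_mono_on_ff[OF nz that] adm] .
    moreover have "continuous_on I ?F"
      using continuous_on_subset[OF continuous_on_ff adm] .
    ultimately have zeros: "sign_change \<longrightarrow> (\<exists>lh\<in>I. Z = {lh})" "\<not> sign_change \<longrightarrow> Z = {}"
      using strict_mono_on_zero_set[of I ?F] connected_interior_Lam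
      by (simp_all add: I_def Z_def inf sup sign_change_def)
    moreover have "\<not> vanishing"
    proof
      assume "vanishing"
      then have "0 \<in> Z" and "\<not> sign_change"
        using INF_SUP_eq_imp_const[of ?F I 0] \<open>0 \<in> I\<close>
        by (simp_all add: Z_def I_def inf sup zero_ereal_def vanishing_def sign_change_def)
      then show False using zeros(2) by auto
    qed
    ultimately show ?thesis by blast
  qed
  show "sign_change \<Longrightarrow> \<exists>lh\<in>I. Z = {lh}"
    using degenerate nondegenerate by blast
  show "vanishing \<Longrightarrow> Z = I \<and> (\<forall>l\<in>I. wfun q gam del eps l = (\<lambda>_. 0))"
    using degenerate nondegenerate by (cases ?degenerate) auto
  show "\<not> sign_change \<Longrightarrow> \<not> vanishing \<Longrightarrow> Z = {}"
    using degenerate nondegenerate by (cases ?degenerate) auto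
qed

theorem proposition8p2:
  fixes q :: nat and gam del :: "nat \<Rightarrow> real" and k eps :: real
  assumes "q \<ge> 1"
    and "\<And>i j. 1 \<le> i \<Longrightarrow> i < j \<Longrightarrow> j \<le> q \<Longrightarrow> gam i > gam j"
    and "\<And>i. 1 \<le> i \<Longrightarrow> i \<le> q \<Longrightarrow> gam i \<noteq> 0"
    and "gam 1 > 0"
    and "\<And>i. 1 \<le> i \<Longrightarrow> i \<le> q \<Longrightarrow> del i \<ge> 0"
    and "eps \<ge> 0"
    and "Wset q gam k eps \<noteq> {}"
  shows
    "(f_inf q gam del k eps < 0 \<and> 0 < f_sup q gam del k eps \<longrightarrow>
        (\<exists>lh\<in>interior (Lam q gam). ff q gam del k eps lh = 0
           \<and> (\<forall>l\<in>interior (Lam q gam). ff q gam del k eps l = 0 \<longrightarrow> l = lh)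
           \<and> What q gam del k eps = Wcirc q gam del k eps
           \<and> Wcirc q gam del k eps = {wfun q gam del eps lh}))
   \<and> (f_inf q gam del k eps = 0 \<and> f_sup q gam del k eps = 0 \<longrightarrow>
        (\<forall>l\<in>interior (Lam q gam). ff q gam del k eps l = 0)
        \<and> What q gam del k eps = Wcirc q gam del k eps
        \<and> Wcirc q gam del k eps = {(\<lambda>_. 0)})
   \<and> (\<not> (f_inf q gam del k eps < 0 \<and> 0 < f_sup q gam del k eps)
       \<and> \<not> (f_inf q gam del k eps = 0 \<and> f_sup q gam del k eps = 0) \<longrightarrow>
        (\<forall>l\<in>interior (Lam q gam). ff q gam del k eps l \<noteq> 0)
        \<and> Wcirc q gam del k eps = {})"
proof -
  define I where "I = interior (Lam q gam)"
  define Z where "Z = {l \<in> I. ff q gam del k eps l = 0}"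
  have adm: "admissible q gam l" if "l \<in> I" for l
    using admissible_if_in_interior_Lam[of q gam, OF assms(2-4)] that by (simp add: I_def)
  have Wcirc: "Wcirc q gam del k eps = wfun q gam del eps ` Z"
    using Wlam_eq[OF adm] by (auto simp: Wcirc_def I_def Z_def split: if_splits)
  have What: "What q gam del k eps = {wfun q gam del eps l}" if "l \<in> Z" for l
    using What_eq[OF adm] that by (simp add: Z_def)
  note zeros = ff_zero_set[of q gam del k eps, OF assms(1-4), folded I_def, folded Z_def]
  show ?thesis
  proof (intro conjI impI)
    assume "f_inf q gam del k eps < 0 \<and> 0 < f_sup q gam del k eps"
    then obtain lh where "lh \<in> I" "Z = {lh}" using zeros(1) by blast
    then show "\<exists>lh\<in>interior (Lam q gam). ff q gam del k eps lh = 0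
           \<and> (\<forall>l\<in>interior (Lam q gam). ff q gam del k eps l = 0 \<longrightarrow> l = lh)
           \<and> What q gam del k eps = Wcirc q gam del k eps
           \<and> Wcirc q gam del k eps = {wfun q gam del eps lh}"
      using What[of lh] by (auto simp: Wcirc I_def Z_def)
  next
    assume "f_inf q gam del k eps = 0 \<and> f_sup q gam del k eps = 0"
    then have "Z = I" "\<forall>l\<in>I. wfun q gam del eps l = (\<lambda>_. 0)" using zeros(2) by blast+
    moreover have "0 \<in> I"
      using assms(1,3,4) by (auto simp: I_def intro: zero_in_interior_Lam)
    ultimately show "\<forall>l\<in>interior (Lam q gam). ff q gam del k eps l = 0"
      and "What q gam del k eps = Wcirc q gam del k eps"
      and "Wcirc q gam del k eps = {(\<lambda>_. 0)}"
      using What[of 0] by (auto simp: Wcirc I_def Z_def)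
  next
    assume "\<not> (f_inf q gam del k eps < 0 \<and> 0 < f_sup q gam del k eps)
       \<and> \<not> (f_inf q gam del k eps = 0 \<and> f_sup q gam del k eps = 0)"
    then have "Z = {}" using zeros(3) by blast
    then show "\<forall>l\<in>interior (Lam q gam). ff q gam del k eps l \<noteq> 0"
      and "Wcirc q gam del k eps = {}"
      by (auto simp: Wcirc I_def Z_def)
  qed
qed

end
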